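(* Let $\Phi$ be an automorphism of the category $(Rep\text{-}R)^0$ with $\Phi((W_1,F_1))=(W_1,F_1)$, so that $\Phi$ restricts to a monoid automorphism of $End_1$. Then $$\Phi(T_e)=T_e,\quad \Phi(T_0)=T_0,\quad \Phi(T_x)=T_x,\quad \Phi(\nu_{(0,x)})=\nu_{(0,x)}.$$
   Context: $R$ is a commutative associative ring with unit. A group representation $(A,G,\cdot)$ is a unital $R$-module $A$ with a right action of the group $G$ by $R$-module automorphisms. A homomorphism is a pair $(\mu^{(1)},\mu^{(2)})$ (an $R$-linear map and a group homomorphism) with $\mu^{(1)}(a\cdot g)=\mu^{(1)}(a)\bullet\mu^{(2)}(g)$. A free representation over a pair of sets $(Y,X)$ is $(W,F)$, where $F$ is the free group on $X$ and $W$ is the free right $RF$-module on $Y$, with $F$ acting by right multiplication. $(Rep\text{-}R)^0$ is the category of free representations over pairs $(Y,X)$ of finite subsets of fixed infinite sets $Y_0,X_0$, with all homomorphisms. $(W_1,F_1)$ is the free representation with one module generator and one group generator: $F_1=\langle x\rangle$ is infinite cyclic with identity $e$, and $W_1=RF_1$. $End_1$ is its endomorphism monoid, and $\nu_{(w,g)}$ is the endomorphism with $1\mapsto w$, $x\mapsto g$. Finally, $$T_e=\{\nu_{(w,e)}:w\in W_1\},\quad T_0=\{\nu_{(0,g)}:g\in F_1\},\quad T_x=\{\nu_{(w,x)}:w\in W_1\}.$$ *)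

theory Defs
  imports Main
begin

type_synonym 'x word = "('x \<times> bool) list"

definition inv_letter :: "'x \<times> bool \<Rightarrow> 'x \<times> bool" where
  "inv_letter l = (fst l, \<not> snd l)"

fun reduced :: "'x word \<Rightarrow> bool" where
  "reduced (a # b # w) = (b \<noteq> inv_letter a \<and> reduced (b # w))"
| "reduced _ = True"

definition prepend :: "'x \<times> bool \<Rightarrow> 'x word \<Rightarrow> 'x word" where
  "prepend l w = (case w of [] \<Rightarrow> [l] | m # w' \<Rightarrow> if m = inv_letter l then w' else l # w)"

definition fg_mult :: "'x word \<Rightarrow> 'x word \<Rightarrow> 'x word" where
  "fg_mult u v = foldr prepend u v"

definition fg_inv :: "'x word \<Rightarrow> 'x word" where
  "fg_inv u = rev (map inv_letter u)"

definition FG :: "'x set \<Rightarrow> 'x word set" where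
  "FG X = {w. reduced w \<and> fst ` set w \<subseteq> X}"

text \<open>W = free right RF-module on Y = free R-module with basis Y \<times> F.
  An element is a finitely supported function Y \<times> F \<rightarrow> R.\<close>
type_synonym ('y,'x,'r) elt = "'y \<Rightarrow> 'x word \<Rightarrow> 'r"

definition Wmod :: "'y set \<Rightarrow> 'x set \<Rightarrow> ('y,'x,'r::comm_ring_1) elt set" where
  "Wmod Y X = {a. finite {(y,f). a y f \<noteq> 0} \<and>
                 (\<forall>y f. a y f \<noteq> 0 \<longrightarrow> y \<in> Y \<and> f \<in> FG X)}"

definition zeroW :: "('y,'x,'r::comm_ring_1) elt" where
  "zeroW = (\<lambda>y f. 0)"

definition delta :: "'y \<Rightarrow> 'x word \<Rightarrow> ('y,'x,'r::comm_ring_1) elt" where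
  "delta y0 f0 = (\<lambda>y f. if y = y0 \<and> f = f0 then 1 else 0)"

definition act :: "('y,'x,'r::comm_ring_1) elt \<Rightarrow> 'x word \<Rightarrow> ('y,'x,'r) elt" where
  "act a g = (\<lambda>y h. if reduced h then a y (fg_mult h (fg_inv g)) else 0)"

type_synonym ('y,'x,'r) mor = "(('y,'x,'r) elt \<Rightarrow> ('y,'x,'r) elt) \<times> ('x word \<Rightarrow> 'x word)"

definition Obj :: "'y set \<Rightarrow> 'x set \<Rightarrow> ('y set \<times> 'x set) set" where
  "Obj Y0 X0 = {(Y,X). finite Y \<and> Y \<subseteq> Y0 \<and> finite X \<and> X \<subseteq> X0}"

text \<open>Homomorphisms (mu1, mu2), represented extensionally (mu1 = 0 outside W, mu2 = e outside F).\<close>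
definition Hom :: "('y set \<times> 'x set) \<Rightarrow> ('y set \<times> 'x set) \<Rightarrow> ('y,'x,'r::comm_ring_1) mor set" where
  "Hom A B = {(m1, m2).
     (\<forall>a \<in> Wmod (fst A) (snd A). m1 a \<in> Wmod (fst B) (snd B)) \<and>
     (\<forall>a \<in> Wmod (fst A) (snd A). \<forall>b \<in> Wmod (fst A) (snd A).
         m1 (\<lambda>y f. a y f + b y f) = (\<lambda>y f. m1 a y f + m1 b y f)) \<and>
     (\<forall>r. \<forall>a \<in> Wmod (fst A) (snd A). m1 (\<lambda>y f. r * a y f) = (\<lambda>y f. r * m1 a y f)) \<and>
     (\<forall>g \<in> FG (snd A). m2 g \<in> FG (snd B)) \<and>
     (\<forall>g \<in> FG (snd A). \<forall>h \<in> FG (snd A). m2 (fg_mult g h) = fg_mult (m2 g) (m2 h)) \<and>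
     (\<forall>a \<in> Wmod (fst A) (snd A). \<forall>g \<in> FG (snd A). m1 (act a g) = act (m1 a) (m2 g)) \<and>
     (\<forall>a. a \<notin> Wmod (fst A) (snd A) \<longrightarrow> m1 a = zeroW) \<and>
     (\<forall>g. g \<notin> FG (snd A) \<longrightarrow> m2 g = [])}"

definition idm :: "('y set \<times> 'x set) \<Rightarrow> ('y,'x,'r::comm_ring_1) mor" where
  "idm A = ((\<lambda>a. if a \<in> Wmod (fst A) (snd A) then a else zeroW),
            (\<lambda>g. if g \<in> FG (snd A) then g else []))"

definition comp :: "('y,'x,'r::comm_ring_1) mor \<Rightarrow> ('y,'x,'r) mor \<Rightarrow> ('y,'x,'r) mor" where
  "comp g f = (fst g \<circ> fst f, snd g \<circ> snd f)"

definition cat_automorphism ::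
  "'y set \<Rightarrow> 'x set \<Rightarrow> ('y set \<times> 'x set \<Rightarrow> 'y set \<times> 'x set) \<Rightarrow>
   ('y set \<times> 'x set \<Rightarrow> 'y set \<times> 'x set \<Rightarrow> ('y,'x,'r::comm_ring_1) mor \<Rightarrow> ('y,'x,'r) mor) \<Rightarrow> bool" where
  "cat_automorphism Y0 X0 Po Pm \<longleftrightarrow>
     bij_betw Po (Obj Y0 X0) (Obj Y0 X0) \<and>
     (\<forall>A \<in> Obj Y0 X0. \<forall>B \<in> Obj Y0 X0. bij_betw (Pm A B) (Hom A B) (Hom (Po A) (Po B))) \<and>
     (\<forall>A \<in> Obj Y0 X0. Pm A A (idm A) = idm (Po A)) \<and>
     (\<forall>A \<in> Obj Y0 X0. \<forall>B \<in> Obj Y0 X0. \<forall>C \<in> Obj Y0 X0. \<forall>f \<in> Hom A B. \<forall>g \<in> Hom B C.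
        Pm A C (comp g f) = comp (Pm B C g) (Pm A B f))"

text \<open>(W_1,F_1) is the free representation over ({y1},{x1}); its module generator "1"
  is delta y1 [] and the group generator x is the word [(x1,True)].\<close>
definition nu :: "'y \<Rightarrow> 'x \<Rightarrow> ('y,'x,'r::comm_ring_1) elt \<Rightarrow> 'x word \<Rightarrow> ('y,'x,'r) mor" where
  "nu y1 x1 w g = (THE m. m \<in> Hom ({y1},{x1}) ({y1},{x1}) \<and>
                       fst m (delta y1 []) = w \<and> snd m [(x1,True)] = g)"

definition T_e :: "'y \<Rightarrow> 'x \<Rightarrow> ('y,'x,'r::comm_ring_1) mor set" where
  "T_e y1 x1 = {nu y1 x1 w [] | w. w \<in> Wmod {y1} {x1}}"

definition T_0 :: "'y \<Rightarrow> 'x \<Rightarrow> ('y,'x,'r::comm_ring_1) mor set" where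
  "T_0 y1 x1 = {nu y1 x1 zeroW g | g. g \<in> FG {x1}}"

definition T_x :: "'y \<Rightarrow> 'x \<Rightarrow> ('y,'x,'r::comm_ring_1) mor set" where
  "T_x y1 x1 = {nu y1 x1 w [(x1,True)] | w. w \<in> Wmod {y1} {x1}}"

end

theory Submission
  imports Defs "HOL-Library.Groups_Big_Fun"
begin

text \<open>
  The endomorphism \<open>\<nu>(w, x\<^sup>k)\<close> of \<open>(W\<^sub>1, F\<^sub>1)\<close> sends \<open>a(x) \<in> W\<^sub>1 = R[x, x\<^sup>-\<^sup>1]\<close> to \<open>w(x) a(x\<^sup>k)\<close>,
  so \<open>End\<^sub>1\<close> is the monoid of pairs \<open>(w, k)\<close> with \<open>(w, k) \<circ> (w', k') = (w(x) w'(x\<^sup>k), k k')\<close>.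
  There \<open>\<nu>(0, e)\<close> is the absorbing element, and \<open>\<nu>(0, x)\<close> is the only central idempotent
  \<open>f \<noteq> \<nu>(0, e)\<close> all of whose multiples \<open>f \<circ> n\<close> are central. Both descriptions are invariant
  under monoid automorphisms, so \<open>\<Phi>\<close> fixes both elements, and with them the sets
  \<open>T\<^sub>e = {m. m \<circ> \<nu>(0, x) = \<nu>(0, e)}\<close>, \<open>T\<^sub>x = {m. m \<circ> \<nu>(0, x) = \<nu>(0, x)}\<close> and
  \<open>T\<^sub>0 = {m. \<nu>(0, x) \<circ> m = m}\<close>.
\<close>

section \<open>Reduced words\<close>

lemma inv_letter_inv [simp]: "inv_letter (inv_letter l) = l"
  by (simp add: inv_letter_def)

lemma inv_letter_neq [simp]: "inv_letter l \<noteq> l" "l \<noteq> inv_letter l"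
  by (auto simp: inv_letter_def prod_eq_iff)

lemma reduced_ConsD: "reduced (a # w) \<Longrightarrow> reduced w"
  by (cases w) auto

lemma reduced_prepend: "reduced u \<Longrightarrow> reduced (prepend l u)"
  by (cases u) (auto simp: prepend_def dest: reduced_ConsD)

lemma prepend_prepend_inv_letter: "reduced u \<Longrightarrow> prepend l (prepend (inv_letter l) u) = u"
  by (cases u; cases "tl u") (auto simp: prepend_def)

lemma fg_mult_Nil [simp]: "fg_mult [] v = v"
  and fg_mult_Cons [simp]: "fg_mult (l # u) v = prepend l (fg_mult u v)"
  and fg_mult_append: "fg_mult (u @ u') v = fg_mult u (fg_mult u' v)"
  by (simp_all add: fg_mult_def)

lemma reduced_fg_mult: "reduced v \<Longrightarrow> reduced (fg_mult u v)"
  by (induction u) (auto intro: reduced_prepend)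

lemma fg_mult_prepend:
  assumes "reduced v" "reduced c"
  shows "fg_mult (prepend l v) c = prepend l (fg_mult v c)"
proof (cases v)
  case (Cons m v')
  then show ?thesis
    using prepend_prepend_inv_letter[OF reduced_fg_mult[OF \<open>reduced c\<close>], of l v']
    by (auto simp: prepend_def)
qed (simp add: prepend_def)

lemma fg_mult_assoc: "reduced b \<Longrightarrow> reduced c \<Longrightarrow> fg_mult (fg_mult a b) c = fg_mult a (fg_mult b c)"
  by (induction a) (auto simp: fg_mult_prepend reduced_fg_mult)

lemma fg_mult_Nil_right: "reduced u \<Longrightarrow> fg_mult u [] = u"
proof (induction u)
  case (Cons l u)
  then have "reduced u" using reduced_ConsD by blast
  with Cons show ?case by (cases u) (auto simp: prepend_def)
qed simp

lemma fg_inv_mult_cancel_left: "reduced u \<Longrightarrow> fg_mult (fg_inv v) (fg_mult v u) = u"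
  by (induction v arbitrary: u)
    (auto simp: fg_inv_def fg_mult_append reduced_fg_mult
      prepend_prepend_inv_letter[of _ "inv_letter _", simplified])

lemma fg_mult_inv_cancel_left: "reduced u \<Longrightarrow> fg_mult v (fg_mult (fg_inv v) u) = u"
  by (induction v arbitrary: u)
    (auto simp: fg_inv_def fg_mult_append reduced_prepend prepend_prepend_inv_letter)

lemma reduced_snoc: "reduced (w @ [a]) \<longleftrightarrow> reduced w \<and> (w = [] \<or> a \<noteq> inv_letter (last w))"
  by (induction w rule: reduced.induct) auto

lemma reduced_fg_inv: "reduced v \<Longrightarrow> reduced (fg_inv v)"
proof (induction v)
  case (Cons l v)
  then have "reduced v" using reduced_ConsD by blast
  moreover have "v \<noteq> [] \<Longrightarrow> last (fg_inv v) = inv_letter (hd v)"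
    by (cases v) (auto simp: fg_inv_def)
  moreover have "v \<noteq> [] \<Longrightarrow> hd v \<noteq> inv_letter l"
    using Cons.prems by (cases v) auto
  ultimately show ?case
    using Cons.IH by (auto simp: reduced_snoc fg_inv_def)
qed (simp add: fg_inv_def)

lemma fg_mult_inv_cancel_right:
  assumes "reduced h" "reduced v"
  shows "fg_mult (fg_mult h v) (fg_inv v) = h"
proof -
  have "fg_mult v (fg_inv v) = []"
    using fg_mult_inv_cancel_left[of "[]" v] fg_mult_Nil_right[OF reduced_fg_inv[OF assms(2)]]
    by simp
  then show ?thesis
    using fg_mult_assoc[OF assms(2) reduced_fg_inv] fg_mult_Nil_right assms by simp
qed

lemma fg_mult_idem_Nil:
  assumes "reduced u" "fg_mult u u = u"
  shows "u = []"
proof -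
  have "u = fg_mult (fg_inv u) (fg_mult u u)"
    using fg_inv_mult_cancel_left[OF assms(1)] by simp
  also have "\<dots> = fg_mult (fg_inv u) (fg_mult u [])"
    using assms fg_mult_Nil_right[OF assms(1)] by simp
  also have "\<dots> = []"
    by (rule fg_inv_mult_cancel_left) simp
  finally show ?thesis .
qed

section \<open>Powers of a single generator\<close>

definition gpow :: "'x \<Rightarrow> int \<Rightarrow> 'x word" where
  "gpow x n = (if 0 \<le> n then replicate (nat n) (x, True) else replicate (nat (- n)) (x, False))"

definition exponent :: "'x word \<Rightarrow> int" where
  "exponent w = (if w \<noteq> [] \<and> \<not> snd (hd w) then - int (length w) else int (length w))"

lemma exponent_gpow [simp]: "exponent (gpow x n) = n"
  by (cases "n = 0") (auto simp: gpow_def exponent_def hd_replicate)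

lemma gpow_eq_iff [simp]: "gpow x m = gpow x n \<longleftrightarrow> m = n"
  by (metis exponent_gpow)

lemma gpow_0 [simp]: "gpow x 0 = []"
  and gpow_1: "gpow x 1 = [(x, True)]"
  by (simp_all add: gpow_def)

lemma reduced_replicate: "reduced (replicate k l)"
proof (induction k)
  case (Suc k)
  then show ?case by (cases k) auto
qed simp

lemma gpow_in_FG [simp]: "gpow x n \<in> FG {x}"
  by (auto simp: gpow_def FG_def reduced_replicate)

lemma FG_reduced: "g \<in> FG X \<Longrightarrow> reduced g"
  by (simp add: FG_def)

lemma reduced_single_letter:
  assumes "reduced w" "fst ` set w \<subseteq> {x}"
  shows "\<exists>b k. w = replicate k (x, b)"
  using assms
proof (induction w)
  case (Cons a w)
  have "reduced w" using Cons.prems(1) by (rule reduced_ConsD)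
  moreover have "fst ` set w \<subseteq> {x}" using Cons.prems(2) by auto
  ultimately obtain b k where w: "w = replicate k (x, b)" using Cons.IH by blast
  obtain b0 where a: "a = (x, b0)"
    using Cons.prems(2) by (cases a) auto
  show ?case
  proof (cases k)
    case 0
    then have "a # w = replicate 1 (x, b0)" using w a by simp
    then show ?thesis by blast
  next
    case (Suc k')
    then have "b = b0" using Cons.prems(1) w a by (auto simp: inv_letter_def)
    then have "a # w = replicate (Suc k) (x, b)" using w a by simp
    then show ?thesis by blast
  qed
qed simp

lemma gpow_exponent:
  assumes "w \<in> FG {x}"
  shows "gpow x (exponent w) = w"
proof -
  have "reduced w" "fst ` set w \<subseteq> {x}"
    using assms by (auto simp: FG_def)
  then obtain b k where w: "w = replicate k (x, b)"
    using reduced_single_letter by meson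
  show ?thesis
  proof (cases k)
    case 0 then show ?thesis using w by (simp add: exponent_def)
  next
    case (Suc k')
    show ?thesis
    proof (cases b)
      case True
      then have "exponent w = int k" using w Suc by (simp add: exponent_def)
      then show ?thesis using w True by (simp add: gpow_def)
    next
      case False
      then have "exponent w = - int k" using w Suc by (simp add: exponent_def)
      moreover have "k > 0" using Suc by simp
      ultimately show ?thesis using w False by (simp add: gpow_def)
    qed
  qed
qed

lemma FG_single_iff: "w \<in> FG {x} \<longleftrightarrow> (\<exists>n. w = gpow x n)"
  by (metis gpow_exponent gpow_in_FG)

lemma prepend_replicate: "prepend l (replicate k l) = replicate (Suc k) l"
  and prepend_inv_replicate: "prepend (inv_letter l) (replicate (Suc k) l) = replicate k l"
  by (cases k) (auto simp: prepend_def)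

lemma prepend_gpow_True: "prepend (x, True) (gpow x n) = gpow x (n + 1)"
proof (cases "0 \<le> n")
  case True
  then have "gpow x n = replicate (nat n) (x, True)"
    and "gpow x (n + 1) = replicate (Suc (nat n)) (x, True)"
    by (auto simp: gpow_def nat_add_distrib)
  then show ?thesis by (simp add: prepend_replicate)
next
  case False
  then obtain k where k: "nat (- n) = Suc k" by (cases "nat (- n)") auto
  have "(x, True) = inv_letter (x, False)" by (simp add: inv_letter_def)
  moreover have "gpow x n = replicate (Suc k) (x, False)" using False k by (simp add: gpow_def)
  moreover have "gpow x (n + 1) = replicate k (x, False)"
    using False k by (cases "n + 1 = 0") (auto simp: gpow_def)
  ultimately show ?thesis by (simp only: prepend_inv_replicate)
qed

lemma prepend_gpow_False: "prepend (x, False) (gpow x n) = gpow x (n - 1)"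
proof (cases "0 < n")
  case True
  then obtain k where k: "nat n = Suc k" by (cases "nat n") auto
  have "(x, False) = inv_letter (x, True)" by (simp add: inv_letter_def)
  moreover have "gpow x n = replicate (Suc k) (x, True)" using True k by (simp add: gpow_def)
  moreover have "gpow x (n - 1) = replicate k (x, True)"
    using True k by (simp add: gpow_def nat_diff_distrib)
  ultimately show ?thesis by (simp only: prepend_inv_replicate)
next
  case False
  have "nat (1 - n) = Suc (nat (- n))" using False by (subst nat_eq_iff) auto
  then have "gpow x (n - 1) = replicate (Suc (nat (- n))) (x, False)"
    using False by (simp add: gpow_def)
  moreover have "gpow x n = replicate (nat (- n)) (x, False)" using False by (auto simp: gpow_def)
  ultimately show ?thesis by (simp add: prepend_replicate)
qed

lemma fg_mult_gpow [simp]: "fg_mult (gpow x m) (gpow x n) = gpow x (m + n)"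
proof -
  have "fg_mult (replicate k (x, True)) (gpow x n) = gpow x (int k + n)"
    and "fg_mult (replicate k (x, False)) (gpow x n) = gpow x (n - int k)" for k
    by (induction k) (auto simp: prepend_gpow_True prepend_gpow_False algebra_simps)
  then show ?thesis by (auto simp: gpow_def[of x m])
qed

lemma fg_inv_gpow [simp]: "fg_inv (gpow x n) = gpow x (- n)"
  by (auto simp: gpow_def fg_inv_def inv_letter_def)

lemma fg_mult_in_FG_single: "g \<in> FG {x} \<Longrightarrow> h \<in> FG {x} \<Longrightarrow> fg_mult g h \<in> FG {x}"
  by (auto simp: FG_single_iff)

lemma exponent_fg_mult: "g \<in> FG {x} \<Longrightarrow> h \<in> FG {x} \<Longrightarrow> exponent (fg_mult g h) = exponent g + exponent h"
  by (auto simp: FG_single_iff)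

lemma exponent_Nil: "exponent [] = 0"
  by (simp add: exponent_def)

lemma exponent_letter: "exponent [(x, True)] = 1"
  using exponent_gpow[of x 1] by (simp only: gpow_1)

section \<open>Finitely supported coefficient functions\<close>

abbreviation finite_support :: "('a \<Rightarrow> 'b::zero) \<Rightarrow> bool" where
  "finite_support c \<equiv> finite {n. c n \<noteq> 0}"

definition monom :: "'r::zero \<Rightarrow> int \<Rightarrow> int \<Rightarrow> 'r" where
  "monom r j = (\<lambda>n. if n = j then r else 0)"

lemma finite_support_monom [simp]: "finite_support (monom r j)"
  by (rule finite_subset[of _ "{j}"]) (auto simp: monom_def)

lemma finite_support_add:
  "finite_support c \<Longrightarrow> finite_support d \<Longrightarrow> finite_support (\<lambda>n. c n + d n :: 'r::comm_monoid_add)"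
  by (rule finite_subset[of _ "{n. c n \<noteq> 0} \<union> {n. d n \<noteq> 0}"]) auto

lemma finite_support_smult:
  "finite_support c \<Longrightarrow> finite_support (\<lambda>n. r * c n :: 'r::mult_zero)"
  by (rule finite_subset[of _ "{n. c n \<noteq> 0}"]) auto

lemma finite_support_shift:
  assumes "finite_support c"
  shows "finite_support (\<lambda>n. c (n - j :: int))"
proof -
  have "{n. c (n - j) \<noteq> 0} = (\<lambda>n. n + j) ` {n. c n \<noteq> 0}"
    by (auto intro!: image_eqI[of _ _ "_ - j"])
  then show ?thesis using assms by simp
qed

lemma finite_support_induct [consumes 1, case_names zero update]:
  assumes "finite_support c"
    and "P (\<lambda>n. 0)"
    and "\<And>c i r. finite_support c \<Longrightarrow> c i = 0 \<Longrightarrow> P c \<Longrightarrow> P (c(i := r))"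
  shows "P c"
proof -
  have "\<And>c. {n. c n \<noteq> 0} = S \<Longrightarrow> P c" if "finite S" for S
    using that
  proof (induction S)
    case empty
    then have "c = (\<lambda>n. 0)" by auto
    with assms(2) show ?case by simp
  next
    case (insert i S c)
    have "{n. (c(i := 0)) n \<noteq> 0} = S" using insert.hyps(2) insert.prems by auto
    then have "P (c(i := 0))" by (rule insert.IH)
    moreover have "finite_support (c(i := 0))"
      using insert.hyps(1) \<open>{n. (c(i := 0)) n \<noteq> 0} = S\<close> by (simp only:)
    ultimately have "P ((c(i := 0))(i := c i))"
      using assms(3)[of "c(i := 0)" i "c i"] by simp
    then show ?case by simp
  qed
  then show ?thesis using assms(1) by blast
qed

text \<open>The coefficients of the Laurent polynomial \<open>c(x) a(x\<^sup>k)\<close>.\<close>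

definition mult_subst :: "(int \<Rightarrow> 'r::comm_ring_1) \<Rightarrow> int \<Rightarrow> (int \<Rightarrow> 'r) \<Rightarrow> int \<Rightarrow> 'r" where
  "mult_subst c k a n = Sum_any (\<lambda>i. a i * c (n - k * i))"

lemma finite_support_mult_left:
  "finite_support a \<Longrightarrow> finite_support (\<lambda>i. a i * (g i :: 'r::mult_zero))"
  by (rule finite_subset[of _ "{n. a n \<noteq> 0}"]) auto

lemma finite_support_mult_subst:
  assumes "finite_support c" "finite_support a"
  shows "finite_support (mult_subst c k a)"
proof -
  have "{n. mult_subst c k a n \<noteq> 0} \<subseteq> (\<lambda>(i, l). k * i + l) ` ({i. a i \<noteq> 0} \<times> {l. c l \<noteq> 0})"
  proof
    fix n
    assume "n \<in> {n. mult_subst c k a n \<noteq> 0}"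
    then obtain i where "a i * c (n - k * i) \<noteq> 0"
      unfolding mult_subst_def by (auto elim: Sum_any.not_neutral_obtains_not_neutral)
    then show "n \<in> (\<lambda>(i, l). k * i + l) ` ({i. a i \<noteq> 0} \<times> {l. c l \<noteq> 0})"
      by (intro image_eqI[of _ _ "(i, n - k * i)"]) auto
  qed
  then show ?thesis
    using assms by (auto intro: finite_subset)
qed

lemma mult_subst_add:
  "finite_support a \<Longrightarrow> finite_support b \<Longrightarrow>
    mult_subst c k (\<lambda>n. a n + b n) = (\<lambda>n. mult_subst c k a n + mult_subst c k b n)"
  by (auto simp: mult_subst_def fun_eq_iff distrib_right
      Sum_any.distrib[OF finite_support_mult_left finite_support_mult_left])

lemma mult_subst_smult:
  "finite_support a \<Longrightarrow> mult_subst c k (\<lambda>n. r * a n) = (\<lambda>n. r * mult_subst c k a n)"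
  by (auto simp: mult_subst_def fun_eq_iff mult.assoc
      Sum_any_right_distrib[OF finite_support_mult_left])

lemma mult_subst_shift: "mult_subst c k (\<lambda>n. a (n - j)) = (\<lambda>n. mult_subst c k a (n - k * j))"
proof (intro ext)
  fix n
  have "bij (\<lambda>i::int. i + j)"
    by (rule bijI) (auto simp: inj_def surj_def intro!: exI[of _ "_ - j"])
  then have "Sum_any (\<lambda>i. a (i - j) * c (n - k * i)) = Sum_any (\<lambda>i. a i * c (n - k * j - k * i))"
    by (rule Sum_any.reindex_cong) (auto simp: algebra_simps)
  then show "mult_subst c k (\<lambda>n. a (n - j)) n = mult_subst c k a (n - k * j)"
    by (simp add: mult_subst_def)
qed

lemma mult_subst_monom: "mult_subst c k (monom r j) = (\<lambda>n. r * c (n - k * j))"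
proof (intro ext)
  fix n
  have "(\<lambda>i. monom r j i * c (n - k * i)) = (\<lambda>i. if i = j then r * c (n - k * i) else 0)"
    by (auto simp: monom_def)
  then show "mult_subst c k (monom r j) n = r * c (n - k * j)"
    unfolding mult_subst_def by (simp only: Sum_any.delta)
qed

lemma mult_subst_one [simp]: "mult_subst c k (monom 1 0) = c"
  by (simp add: mult_subst_monom)

lemma mult_subst_zero_left [simp]: "mult_subst (\<lambda>n. 0) k a = (\<lambda>n. 0)"
  and mult_subst_zero_right [simp]: "mult_subst c k (\<lambda>n. 0) = (\<lambda>n. 0)"
  by (simp_all add: mult_subst_def fun_eq_iff)

lemma mult_subst_0: "finite_support a \<Longrightarrow> mult_subst c 0 a = (\<lambda>n. Sum_any a * c n)"
  by (simp add: mult_subst_def fun_eq_iff Sum_any_left_distrib)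

section \<open>Homomorphisms of free representations\<close>

lemma zeroW_in_Wmod [simp]: "zeroW \<in> Wmod Y X"
  by (simp add: Wmod_def zeroW_def)

lemma Nil_in_FG [simp]: "[] \<in> FG X"
  by (simp add: FG_def)

lemma HomI:
  assumes "\<And>a. a \<in> Wmod Y X \<Longrightarrow> m1 a \<in> Wmod Y' X'"
    and "\<And>a b. a \<in> Wmod Y X \<Longrightarrow> b \<in> Wmod Y X \<Longrightarrow>
         m1 (\<lambda>y f. a y f + b y f) = (\<lambda>y f. m1 a y f + m1 b y f)"
    and "\<And>r a. a \<in> Wmod Y X \<Longrightarrow> m1 (\<lambda>y f. r * a y f) = (\<lambda>y f. r * m1 a y f)"
    and "\<And>g. g \<in> FG X \<Longrightarrow> m2 g \<in> FG X'"
    and "\<And>g h. g \<in> FG X \<Longrightarrow> h \<in> FG X \<Longrightarrow> m2 (fg_mult g h) = fg_mult (m2 g) (m2 h)"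
    and "\<And>a g. a \<in> Wmod Y X \<Longrightarrow> g \<in> FG X \<Longrightarrow> m1 (act a g) = act (m1 a) (m2 g)"
    and "\<And>a. a \<notin> Wmod Y X \<Longrightarrow> m1 a = zeroW"
    and "\<And>g. g \<notin> FG X \<Longrightarrow> m2 g = []"
  shows "(m1, m2) \<in> Hom (Y, X) (Y', X')"
  using assms unfolding Hom_def fst_conv snd_conv by blast

lemma HomD:
  assumes "m \<in> Hom (Y, X) (Y', X')"
  shows Hom_fst_in_Wmod: "\<And>a. a \<in> Wmod Y X \<Longrightarrow> fst m a \<in> Wmod Y' X'"
    and Hom_fst_add: "\<And>a b. a \<in> Wmod Y X \<Longrightarrow> b \<in> Wmod Y X \<Longrightarrow>
         fst m (\<lambda>y f. a y f + b y f) = (\<lambda>y f. fst m a y f + fst m b y f)"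
    and Hom_fst_smult: "\<And>r a. a \<in> Wmod Y X \<Longrightarrow> fst m (\<lambda>y f. r * a y f) = (\<lambda>y f. r * fst m a y f)"
    and Hom_snd_in_FG: "\<And>g. g \<in> FG X \<Longrightarrow> snd m g \<in> FG X'"
    and Hom_snd_mult: "\<And>g h. g \<in> FG X \<Longrightarrow> h \<in> FG X \<Longrightarrow>
         snd m (fg_mult g h) = fg_mult (snd m g) (snd m h)"
    and Hom_fst_act: "\<And>a g. a \<in> Wmod Y X \<Longrightarrow> g \<in> FG X \<Longrightarrow>
         fst m (act a g) = act (fst m a) (snd m g)"
    and Hom_fst_outside: "\<And>a. a \<notin> Wmod Y X \<Longrightarrow> fst m a = zeroW"
    and Hom_snd_outside: "\<And>g. g \<notin> FG X \<Longrightarrow> snd m g = []"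
  using assms unfolding Hom_def fst_conv snd_conv by (auto simp: case_prod_beta)

lemma Hom_fst_zeroW:
  assumes "m \<in> Hom (Y, X) (Y', X')"
  shows "fst m zeroW = zeroW"
  using Hom_fst_smult[OF assms zeroW_in_Wmod, of 0] by (simp add: zeroW_def)

lemma Hom_snd_Nil:
  assumes "m \<in> Hom (Y, X) (Y', X')"
  shows "snd m [] = []"
proof (rule fg_mult_idem_Nil)
  show "reduced (snd m [])"
    using Hom_snd_in_FG[OF assms Nil_in_FG] by (rule FG_reduced)
  show "fg_mult (snd m []) (snd m []) = snd m []"
    using Hom_snd_mult[OF assms Nil_in_FG Nil_in_FG] by simp
qed

lemma Hom_comp:
  fixes f g :: "('y,'x,'r::comm_ring_1) mor"
  assumes f: "f \<in> Hom (Y, X) (Y', X')" and g: "g \<in> Hom (Y', X') (Y'', X'')"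
  shows "comp g f \<in> Hom (Y, X) (Y'', X'')"
  unfolding comp_def
proof (rule HomI)
  fix a b :: "('y,'x,'r) elt"
  assume a: "a \<in> Wmod Y X" and b: "b \<in> Wmod Y X"
  show "(fst g \<circ> fst f) a \<in> Wmod Y'' X''"
    using Hom_fst_in_Wmod[OF g Hom_fst_in_Wmod[OF f a]] by simp
  show "(fst g \<circ> fst f) (\<lambda>y h. a y h + b y h) =
      (\<lambda>y h. (fst g \<circ> fst f) a y h + (fst g \<circ> fst f) b y h)"
    using Hom_fst_add[OF f a b] Hom_fst_add[OF g Hom_fst_in_Wmod[OF f a] Hom_fst_in_Wmod[OF f b]]
    by simp
  show "(fst g \<circ> fst f) (\<lambda>y h. r * a y h) = (\<lambda>y h. r * (fst g \<circ> fst f) a y h)" for r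
    using Hom_fst_smult[OF f a] Hom_fst_smult[OF g Hom_fst_in_Wmod[OF f a]] by simp
next
  fix x z
  assume x: "x \<in> FG X" and z: "z \<in> FG X"
  show "(snd g \<circ> snd f) x \<in> FG X''"
    using Hom_snd_in_FG[OF g Hom_snd_in_FG[OF f x]] by simp
  show "(snd g \<circ> snd f) (fg_mult x z) = fg_mult ((snd g \<circ> snd f) x) ((snd g \<circ> snd f) z)"
    using Hom_snd_mult[OF f x z] Hom_snd_mult[OF g Hom_snd_in_FG[OF f x] Hom_snd_in_FG[OF f z]]
    by simp
  show "(fst g \<circ> fst f) (act a x) = act ((fst g \<circ> fst f) a) ((snd g \<circ> snd f) x)"
    if a: "a \<in> Wmod Y X" for a :: "('y,'x,'r) elt"
    using Hom_fst_act[OF f a x] Hom_fst_act[OF g Hom_fst_in_Wmod[OF f a] Hom_snd_in_FG[OF f x]]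
    by simp
next
  show "(fst g \<circ> fst f) a = zeroW" if "a \<notin> Wmod Y X" for a :: "('y,'x,'r) elt"
    using Hom_fst_outside[OF f that] Hom_fst_zeroW[OF g] by simp
  show "(snd g \<circ> snd f) x = []" if "x \<notin> FG X" for x
    using Hom_snd_outside[OF f that] Hom_snd_Nil[OF g] by simp
qed

section \<open>Multiplicative automorphisms\<close>

definition central :: "'a set \<Rightarrow> ('a \<Rightarrow> 'a \<Rightarrow> 'a) \<Rightarrow> 'a \<Rightarrow> bool" where
  "central H mult f \<longleftrightarrow> (\<forall>n\<in>H. mult f n = mult n f)"

locale mult_automorphism =
  fixes H :: "'a set" and mult :: "'a \<Rightarrow> 'a \<Rightarrow> 'a" and P :: "'a \<Rightarrow> 'a"
  assumes closed: "a \<in> H \<Longrightarrow> b \<in> H \<Longrightarrow> mult a b \<in> H"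
    and bij: "bij_betw P H H"
    and hom: "a \<in> H \<Longrightarrow> b \<in> H \<Longrightarrow> P (mult a b) = mult (P a) (P b)"
begin

lemma in_carrier: "a \<in> H \<Longrightarrow> P a \<in> H"
  using bij by (rule bij_betw_apply)

lemma eq_iff: "a \<in> H \<Longrightarrow> b \<in> H \<Longrightarrow> P a = P b \<longleftrightarrow> a = b"
  using bij by (auto simp: bij_betw_def inj_on_def)

lemma preimageE:
  assumes "b \<in> H"
  obtains a where "a \<in> H" "b = P a"
  using assms bij by (auto simp: bij_betw_def)

lemma fixes_absorbing:
  assumes z: "z \<in> H" and absorbing: "\<And>n. n \<in> H \<Longrightarrow> mult z n = z \<and> mult n z = z"
  shows "P z = z"
proof -
  obtain a where a: "a \<in> H" "z = P a"
    using z by (rule preimageE)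
  have "P z = P (mult z a)" using absorbing a by simp
  also have "\<dots> = mult (P z) z" using hom z a by simp
  also have "\<dots> = z" using absorbing in_carrier z by simp
  finally show ?thesis .
qed

lemma central_image:
  assumes f: "f \<in> H" and "central H mult f"
  shows "central H mult (P f)"
  unfolding central_def
proof
  fix b
  assume "b \<in> H"
  then obtain a where a: "a \<in> H" "b = P a" by (rule preimageE)
  then show "mult (P f) b = mult b (P f)"
    using \<open>central H mult f\<close> hom f by (simp add: central_def flip: hom)
qed

lemma image_invariant_set:
  assumes "\<And>m. m \<in> H \<Longrightarrow> Q (P m) \<longleftrightarrow> Q m"
  shows "P ` {m \<in> H. Q m} = {m \<in> H. Q m}"
proof
  show "P ` {m \<in> H. Q m} \<subseteq> {m \<in> H. Q m}"
    using assms in_carrier by auto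
  show "{m \<in> H. Q m} \<subseteq> P ` {m \<in> H. Q m}"
  proof
    fix b
    assume b: "b \<in> {m \<in> H. Q m}"
    then obtain a where "a \<in> H" "b = P a" by (auto elim: preimageE)
    with b assms show "b \<in> P ` {m \<in> H. Q m}" by auto
  qed
qed

lemma image_solutions_right:
  assumes "a \<in> H" "b \<in> H" "P a = a" "P b = b"
  shows "P ` {m \<in> H. mult m a = b} = {m \<in> H. mult m a = b}"
  using assms by (intro image_invariant_set) (metis closed eq_iff hom)

lemma image_fixed_left:
  assumes "a \<in> H" "P a = a"
  shows "P ` {m \<in> H. mult a m = m} = {m \<in> H. mult a m = m}"
  using assms by (intro image_invariant_set) (metis closed eq_iff hom in_carrier)

end

lemma mult_automorphism_End:
  assumes "cat_automorphism Y0 X0 Po Pm" "A \<in> Obj Y0 X0" "Po A = A"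
  shows "mult_automorphism (Hom A A) comp (Pm A A)"
proof -
  have "bij_betw (Pm A A) (Hom A A) (Hom (Po A) (Po A))"
    and "\<forall>f \<in> Hom A A. \<forall>g \<in> Hom A A. Pm A A (comp g f) = comp (Pm A A g) (Pm A A f)"
    using assms(1,2) unfolding cat_automorphism_def by fast+
  moreover obtain Y X where "A = (Y, X)" by fastforce
  ultimately show ?thesis
    using assms(3) by unfold_locales (simp_all add: Hom_comp)
qed

section \<open>The endomorphism monoid of \<open>(W\<^sub>1, F\<^sub>1)\<close>\<close>

text \<open>
  \<open>W\<^sub>1\<close> is the Laurent polynomial ring \<open>R[x, x\<^sup>-\<^sup>1]\<close>: an element \<open>a\<close> is determined by its
  coefficients \<open>coef a n\<close> at \<open>(y1, x\<^sup>n)\<close>.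
\<close>

locale single_generator =
  fixes y1 :: 'y and x1 :: 'x
begin

definition coef :: "('y,'x,'r::comm_ring_1) elt \<Rightarrow> int \<Rightarrow> 'r" where
  "coef a n = a y1 (gpow x1 n)"

definition of_coef :: "(int \<Rightarrow> 'r::comm_ring_1) \<Rightarrow> ('y,'x,'r) elt" where
  "of_coef c = (\<lambda>y h. if y = y1 \<and> h \<in> FG {x1} then c (exponent h) else 0)"

lemma coef_of_coef [simp]: "coef (of_coef c) = c"
  by (simp add: coef_def of_coef_def fun_eq_iff)

lemma of_coef_inject: "of_coef c = of_coef d \<longleftrightarrow> c = d"
  by (metis coef_of_coef)

lemma of_coef_in_Wmod:
  assumes "finite_support c"
  shows "of_coef c \<in> Wmod {y1} {x1}"
proof -
  have "{(y, h). of_coef c y h \<noteq> 0} \<subseteq> (\<lambda>n. (y1, gpow x1 n)) ` {n. c n \<noteq> 0}"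
  proof clarify
    fix y h
    assume "of_coef c y h \<noteq> 0"
    then have "y = y1" "h \<in> FG {x1}" "c (exponent h) \<noteq> 0"
      by (auto simp: of_coef_def split: if_splits)
    then show "(y, h) \<in> (\<lambda>n. (y1, gpow x1 n)) ` {n. c n \<noteq> 0}"
      by (auto simp: gpow_exponent intro!: image_eqI[of _ _ "exponent h"])
  qed
  then have "finite {(y, h). of_coef c y h \<noteq> 0}"
    using assms by (rule finite_subset[OF _ finite_imageI])
  then show ?thesis by (auto simp: Wmod_def of_coef_def split: if_splits)
qed

lemma Wmod_single_generatorD:
  assumes "a \<in> Wmod {y1} {x1}"
  shows finite_support_coef: "finite_support (coef a)"
    and of_coef_coef: "of_coef (coef a) = a"
proof -
  have fin: "finite {(y, f). a y f \<noteq> 0}"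
    and supp: "\<And>y f. a y f \<noteq> 0 \<Longrightarrow> y = y1 \<and> f \<in> FG {x1}"
    using assms by (auto simp: Wmod_def)
  have "{n. coef a n \<noteq> 0} \<subseteq> (\<lambda>p. exponent (snd p)) ` {(y, f). a y f \<noteq> 0}"
    by (auto simp: coef_def intro!: image_eqI[of _ _ "(y1, gpow x1 _)"])
  then show "finite_support (coef a)"
    using fin by (rule finite_subset[OF _ finite_imageI])
  show "of_coef (coef a) = a"
  proof (intro ext)
    fix y h
    show "of_coef (coef a) y h = a y h"
      using supp[of y h]
      by (cases "y = y1 \<and> h \<in> FG {x1}") (auto simp: of_coef_def coef_def gpow_exponent)
  qed
qed

lemma of_coef_add: "of_coef (\<lambda>n. c n + d n) = (\<lambda>y f. of_coef c y f + of_coef d y f)"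
  and of_coef_smult: "of_coef (\<lambda>n. r * c n) = (\<lambda>y f. r * of_coef c y f)"
  and of_coef_zero: "of_coef (\<lambda>n. 0) = zeroW"
  by (auto simp: of_coef_def zeroW_def fun_eq_iff)

lemma coef_zeroW: "coef zeroW = (\<lambda>n. 0)"
  by (simp add: coef_def zeroW_def fun_eq_iff)

lemma coef_add: "coef (\<lambda>y f. a y f + b y f) = (\<lambda>n. coef a n + coef b n)"
  and coef_smult: "coef (\<lambda>y f. r * a y f) = (\<lambda>n. r * coef a n)"
  by (simp_all add: coef_def fun_eq_iff)

lemma Wmod_single_add:
  "a \<in> Wmod {y1} {x1} \<Longrightarrow> b \<in> Wmod {y1} {x1} \<Longrightarrow> (\<lambda>y f. a y f + b y f) \<in> Wmod {y1} {x1}"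
  using of_coef_in_Wmod[OF finite_support_add[OF finite_support_coef finite_support_coef], of a b]
  by (simp add: of_coef_add of_coef_coef)

lemma Wmod_single_smult: "a \<in> Wmod {y1} {x1} \<Longrightarrow> (\<lambda>y f. r * a y f) \<in> Wmod {y1} {x1}"
  using of_coef_in_Wmod[OF finite_support_smult[OF finite_support_coef], of a r]
  by (simp add: of_coef_smult of_coef_coef)

lemma delta_eq_of_coef: "delta y1 [] = of_coef (monom 1 0)"
proof (intro ext)
  fix y h
  have "h \<in> FG {x1} \<Longrightarrow> h = [] \<longleftrightarrow> exponent h = 0"
    by (metis gpow_exponent gpow_0 exponent_gpow)
  then show "delta y1 [] y h = of_coef (monom 1 0) y h"
    by (auto simp: delta_def of_coef_def monom_def)
qed

lemma act_of_coef: "act (of_coef c) (gpow x1 j) = of_coef (\<lambda>n. c (n - j))"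
proof (intro ext)
  fix y h
  show "act (of_coef c) (gpow x1 j) y h = of_coef (\<lambda>n. c (n - j)) y h"
  proof (cases "reduced h")
    case True
    have "h \<in> FG {x1} \<longleftrightarrow> fg_mult h (gpow x1 (- j)) \<in> FG {x1}"
    proof
      assume "fg_mult h (gpow x1 (- j)) \<in> FG {x1}"
      then have "fg_mult (fg_mult h (gpow x1 (- j))) (gpow x1 j) \<in> FG {x1}"
        by (simp add: fg_mult_in_FG_single)
      then show "h \<in> FG {x1}"
        using fg_mult_inv_cancel_right[OF True FG_reduced[OF gpow_in_FG], of x1 "- j"] by simp
    qed (simp add: fg_mult_in_FG_single)
    then show ?thesis
      using True by (auto simp: act_def of_coef_def FG_single_iff)
  qed (auto simp: act_def of_coef_def FG_def)
qed

abbreviation End1 :: "('y,'x,'r::comm_ring_1) mor set" where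
  "End1 \<equiv> Hom ({y1}, {x1}) ({y1}, {x1})"

text \<open>\<open>endo c k\<close> is \<open>\<nu>(w, x\<^sup>k)\<close> for the \<open>w\<close> with coefficients \<open>c\<close>.\<close>

definition endo :: "(int \<Rightarrow> 'r::comm_ring_1) \<Rightarrow> int \<Rightarrow> ('y,'x,'r) mor" where
  "endo c k =
    ((\<lambda>a. if a \<in> Wmod {y1} {x1} then of_coef (mult_subst c k (coef a)) else zeroW),
     (\<lambda>g. if g \<in> FG {x1} then gpow x1 (k * exponent g) else []))"

abbreviation nu_0e :: "('y,'x,'r::comm_ring_1) mor" where
  "nu_0e \<equiv> endo (\<lambda>n. 0) 0"

abbreviation nu_0x :: "('y,'x,'r::comm_ring_1) mor" where
  "nu_0x \<equiv> endo (\<lambda>n. 0) 1"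

lemma endo_in_End1:
  assumes c: "finite_support c"
  shows "endo c k \<in> End1"
  unfolding endo_def
proof (rule HomI, goal_cases)
  case (1 a)
  then show ?case
    using c by (auto intro!: of_coef_in_Wmod finite_support_mult_subst finite_support_coef)
next
  case (2 a b)
  then show ?case
    using Wmod_single_add[OF 2]
    by (simp add: coef_add mult_subst_add[OF finite_support_coef finite_support_coef] of_coef_add)
next
  case (3 r a)
  then show ?case
    using Wmod_single_smult[OF 3]
    by (simp add: coef_smult mult_subst_smult[OF finite_support_coef] of_coef_smult)
next
  case (5 g h)
  then show ?case
    by (simp add: fg_mult_in_FG_single exponent_fg_mult distrib_left)
next
  case (6 a g)
  then have a: "a = of_coef (coef a)" and g: "g = gpow x1 (exponent g)"
    by (simp_all add: of_coef_coef gpow_exponent)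
  have "act a g = of_coef (\<lambda>n. coef a (n - exponent g))"
    by (subst a, subst g) (rule act_of_coef)
  moreover have "act a g \<in> Wmod {y1} {x1}"
    using \<open>act a g = _\<close> 6 by (simp add: of_coef_in_Wmod finite_support_shift finite_support_coef)
  ultimately show ?case
    using 6 by (simp add: mult_subst_shift act_of_coef)
qed simp_all

lemma fst_endo_delta [simp]: "fst (endo c k) (delta y1 []) = of_coef c"
  by (simp add: endo_def delta_eq_of_coef of_coef_in_Wmod)

lemma snd_endo_x [simp]: "snd (endo c k) [(x1, True)] = gpow x1 k"
  using gpow_in_FG[of x1 1] exponent_gpow[of x1 1] by (simp add: endo_def gpow_1)

lemma endo_eq_iff: "endo c k = endo c' k' \<longleftrightarrow> c = c' \<and> k = k'"
  by (metis fst_endo_delta snd_endo_x of_coef_inject gpow_eq_iff)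

lemma End1_snd_gpow:
  assumes m: "m \<in> End1" and mx: "snd m [(x1, True)] = gpow x1 k"
  shows "snd m (gpow x1 n) = gpow x1 (k * n)"
proof -
  have step: "snd m (gpow x1 (i + 1)) = fg_mult (snd m (gpow x1 i)) (gpow x1 k)" for i
  proof -
    have "snd m (gpow x1 (i + 1)) = snd m (fg_mult (gpow x1 i) (gpow x1 1))"
      by simp
    also have "\<dots> = fg_mult (snd m (gpow x1 i)) (snd m (gpow x1 1))"
      by (rule Hom_snd_mult[OF m]) simp_all
    finally show ?thesis
      using mx by (simp only: gpow_1)
  qed
  show ?thesis
  proof (induction n rule: int_induct[where k = 0])
    case base
    then show ?case using Hom_snd_Nil[OF m] by simp
  next
    case (step1 i)
    have "snd m (gpow x1 (i + 1)) = fg_mult (gpow x1 (k * i)) (gpow x1 k)"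
      using step[of i] step1(2) by (simp only:)
    also have "\<dots> = gpow x1 (k * (i + 1))"
      by (simp add: distrib_left)
    finally show ?case .
  next
    case (step2 i)
    obtain t where t: "snd m (gpow x1 (i - 1)) = gpow x1 t"
      using gpow_exponent[OF Hom_snd_in_FG[OF m gpow_in_FG]] by metis
    then have "gpow x1 (t + k) = gpow x1 (k * i)"
      using step[of "i - 1"] step2 by simp
    then show ?case
      using t by (simp add: algebra_simps)
  qed
qed

lemma of_coef_update:
  assumes "c i = 0"
  shows "of_coef (c(i := r)) = (\<lambda>y f. of_coef c y f + r * act (delta y1 []) (gpow x1 i) y f)"
proof -
  have "c(i := r) = (\<lambda>n. c n + r * monom 1 i n)"
    using assms by (auto simp: monom_def)
  then have "of_coef (c(i := r)) = (\<lambda>y f. of_coef c y f + r * of_coef (monom 1 i) y f)"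
    by (simp add: of_coef_add of_coef_smult)
  also have "of_coef (monom 1 i) = act (delta y1 []) (gpow x1 i)"
    by (auto simp: delta_eq_of_coef act_of_coef monom_def intro: arg_cong[where f = of_coef])
  finally show ?thesis .
qed

lemma act_delta_in_Wmod: "act (delta y1 []) (gpow x1 i) \<in> Wmod {y1} {x1}"
  by (simp add: delta_eq_of_coef act_of_coef of_coef_in_Wmod finite_support_shift)

lemma End1_eqI:
  assumes m: "m \<in> End1" and m': "m' \<in> End1"
    and one: "fst m (delta y1 []) = fst m' (delta y1 [])"
    and x: "snd m [(x1, True)] = snd m' [(x1, True)]"
  shows "m = m'"
proof (rule prod_eqI)
  obtain k where k: "snd m [(x1, True)] = gpow x1 k"
    using gpow_exponent[OF Hom_snd_in_FG[OF m, of "[(x1, True)]"]] gpow_1 gpow_in_FG by metis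
  have snd_gpow: "snd m (gpow x1 n) = snd m' (gpow x1 n)" for n
    using End1_snd_gpow[OF m k] End1_snd_gpow[OF m'] k x by simp
  have fst_of_coef: "fst m (of_coef c) = fst m' (of_coef c)" if "finite_support c" for c
    using that
  proof (induction rule: finite_support_induct)
    case zero
    then show ?case
      by (simp add: of_coef_zero Hom_fst_zeroW[OF m] Hom_fst_zeroW[OF m'])
  next
    case (update c i r)
    have expand: "fst n (of_coef (c(i := r))) =
        (\<lambda>y f. fst n (of_coef c) y f + r * act (fst n (delta y1 [])) (snd n (gpow x1 i)) y f)"
      if n: "n \<in> End1" for n
      using Hom_fst_add[OF n of_coef_in_Wmod[OF update.hyps(1)]
          Wmod_single_smult[OF act_delta_in_Wmod]]
        Hom_fst_smult[OF n act_delta_in_Wmod] Hom_fst_act[OF n _ gpow_in_FG]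
      by (simp add: of_coef_update[of c i r, OF update.hyps(2)] delta_eq_of_coef of_coef_in_Wmod)
    show ?case
      by (simp only: expand[OF m] expand[OF m'] update.IH one snd_gpow)
  qed
  show "fst m = fst m'"
  proof
    fix a
    show "fst m a = fst m' a"
    proof (cases "a \<in> Wmod {y1} {x1}")
      case True
      then show ?thesis
        using fst_of_coef[OF finite_support_coef[OF True]] by (simp add: of_coef_coef[OF True])
    qed (simp add: Hom_fst_outside[OF m] Hom_fst_outside[OF m'])
  qed
  show "snd m = snd m'"
  proof
    fix g
    show "snd m g = snd m' g"
    proof (cases "g \<in> FG {x1}")
      case True
      then show ?thesis
        using snd_gpow[of "exponent g"] by (simp add: gpow_exponent[OF True])
    qed (simp add: Hom_snd_outside[OF m] Hom_snd_outside[OF m'])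
  qed
qed

lemma End1_eq_endo:
  assumes m: "m \<in> End1" and c: "finite_support c"
    and "fst m (delta y1 []) = of_coef c" "snd m [(x1, True)] = gpow x1 k"
  shows "m = endo c k"
  using End1_eqI[OF m endo_in_End1[OF c]] assms(3,4) by simp

lemma End1_cases:
  assumes m: "m \<in> End1"
  obtains c k where "finite_support c" "m = endo c k"
proof
  let ?w = "fst m (delta y1 [])" and ?g = "snd m [(x1, True)]"
  have w: "?w \<in> Wmod {y1} {x1}"
    using Hom_fst_in_Wmod[OF m] by (simp add: delta_eq_of_coef of_coef_in_Wmod)
  have g: "?g \<in> FG {x1}"
    using Hom_snd_in_FG[OF m] gpow_in_FG[of x1 1] by (simp add: gpow_1)
  show "finite_support (coef ?w)"
    using w by (rule finite_support_coef)
  show "m = endo (coef ?w) (exponent ?g)"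
    using m \<open>finite_support (coef ?w)\<close>
    by (rule End1_eq_endo) (simp_all add: of_coef_coef[OF w] gpow_exponent[OF g])
qed

lemma fst_endo_of_coef: "finite_support a \<Longrightarrow> fst (endo c k) (of_coef a) = of_coef (mult_subst c k a)"
  by (simp add: endo_def of_coef_in_Wmod)

lemma snd_endo_gpow: "snd (endo c k) (gpow x1 n) = gpow x1 (k * n)"
  by (simp add: endo_def)

lemma comp_endo:
  assumes "finite_support c" "finite_support c'"
  shows "comp (endo c k) (endo c' k') = endo (mult_subst c k c') (k * k')"
  using Hom_comp[OF endo_in_End1 endo_in_End1] assms
  by (intro End1_eq_endo)
    (simp_all add: comp_def finite_support_mult_subst fst_endo_of_coef snd_endo_gpow flip: gpow_1)

lemma nu_eq_endo:
  assumes w: "w \<in> Wmod {y1} {x1}" and g: "g \<in> FG {x1}"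
  shows "nu y1 x1 w g = endo (coef w) (exponent g)"
  unfolding nu_def
proof (rule the_equality)
  show "endo (coef w) (exponent g) \<in> End1 \<and>
      fst (endo (coef w) (exponent g)) (delta y1 []) = w \<and>
      snd (endo (coef w) (exponent g)) [(x1, True)] = g"
    using endo_in_End1[OF finite_support_coef[OF w]]
    by (simp add: of_coef_coef[OF w] gpow_exponent[OF g])
  show "m = endo (coef w) (exponent g)"
    if "m \<in> End1 \<and> fst m (delta y1 []) = w \<and> snd m [(x1, True)] = g" for m
    using that finite_support_coef[OF w]
    by (intro End1_eq_endo) (simp_all add: of_coef_coef[OF w] gpow_exponent[OF g])
qed

lemma comp_endo_zero:
  assumes "finite_support c"
  shows "comp (endo (\<lambda>n. 0) j) (endo c k) = endo (\<lambda>n. 0) (j * k)"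
    and "comp (endo c k) (endo (\<lambda>n. 0) j) = endo (\<lambda>n. 0) (j * k)"
  using assms by (simp_all add: comp_endo mult.commute)

lemma central_endo_zero: "central End1 comp (endo (\<lambda>n. 0) j)"
  unfolding central_def by (auto elim!: End1_cases simp: comp_endo_zero)

text \<open>
  \<open>endo (monom 1 j) 0 = \<nu>(x\<^sup>j, e)\<close> maps \<open>a\<close> to \<open>\<epsilon>(a) x\<^sup>j\<close>, where \<open>\<epsilon>(a) = Sum_any (coef a)\<close> is the
  augmentation.
\<close>

lemma commute_endo_augmentation:
  assumes p: "finite_support p"
    and commute: "comp (endo p k) (endo (monom 1 j) 0) = comp (endo (monom 1 j) 0) (endo p k)"
  shows "p (n - k * j) = Sum_any p * monom 1 j n"
proof -
  have "comp (endo p k) (endo (monom 1 j) 0) = endo (\<lambda>n. p (n - k * j)) 0"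
    using p by (simp add: comp_endo mult_subst_monom)
  moreover have "comp (endo (monom 1 j) 0) (endo p k) = endo (\<lambda>n. Sum_any p * monom 1 j n) 0"
    using p by (simp add: comp_endo mult_subst_0)
  ultimately show ?thesis
    using commute by (simp add: endo_eq_iff fun_eq_iff)
qed

text \<open>The scalar idempotents \<open>s \<cdot> id\<close> are central too; the last hypothesis excludes them.\<close>

lemma central_idempotent_eq_nu_0x:
  assumes f: "f \<in> End1" and nonzero: "f \<noteq> nu_0e" and idem: "comp f f = f"
    and central: "central End1 comp f"
    and central_multiples: "\<forall>n\<in>End1. central End1 comp (comp f n)"
  shows "f = nu_0x"
proof -
  obtain p k where p: "finite_support p" and f_eq: "f = endo p k"
    using f by (rule End1_cases)
  have commute: "comp f (endo (monom 1 j) 0) = comp (endo (monom 1 j) 0) f" for j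
    using central endo_in_End1[OF finite_support_monom] by (auto simp: central_def)
  have "k * k = k"
    using idem p by (simp add: f_eq comp_endo endo_eq_iff)
  then have "k = 0 \<or> k = 1" by (simp add: mult_eq_self_implies_10)
  have p_supp: "p n = 0" if "n \<noteq> 0" for n
    using commute_endo_augmentation[OF p commute[of 0, unfolded f_eq], of n] that
    by (simp add: monom_def)
  show ?thesis
  proof (cases "k = 0")
    case True
    from commute_endo_augmentation[OF p commute[of 1, unfolded f_eq], of 0]
    have "p 0 = 0" using True by (simp add: monom_def)
    then have "p = (\<lambda>n. 0)" using p_supp by (intro ext) metis
    with nonzero f_eq True show ?thesis by simp
  next
    case False
    then have k: "k = 1" using \<open>k = 0 \<or> k = 1\<close> by simp
    let ?q = "\<lambda>n. p (n - 1)"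
    have "comp f (endo (monom 1 1) 1) = endo ?q 1"
      using p by (simp add: f_eq k comp_endo mult_subst_monom)
    moreover have "central End1 comp (comp f (endo (monom 1 1) 1))"
      using central_multiples endo_in_End1[OF finite_support_monom] by blast
    ultimately have "central End1 comp (endo ?q 1)"
      by simp
    then have "comp (endo ?q 1) (endo (monom 1 0) 0) = comp (endo (monom 1 0) 0) (endo ?q 1)"
      using endo_in_End1[OF finite_support_monom] unfolding central_def by (rule bspec)
    from commute_endo_augmentation[OF finite_support_shift[OF p] this, of 1]
    have "p 0 = 0" by (simp add: monom_def)
    then have "p = (\<lambda>n. 0)" using p_supp by (intro ext) metis
    then show ?thesis using f_eq k by simp
  qed
qed

lemma coef_image_Wmod: "coef ` Wmod {y1} {x1} = {c :: int \<Rightarrow> 'r::comm_ring_1. finite_support c}"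
proof (intro set_eqI iffI)
  fix c :: "int \<Rightarrow> 'r"
  assume "c \<in> {c. finite_support c}"
  then have "of_coef c \<in> Wmod {y1} {x1}" by (simp add: of_coef_in_Wmod)
  then show "c \<in> coef ` Wmod {y1} {x1}" by (rule rev_image_eqI) simp
qed (auto simp: finite_support_coef)

lemma image_nu:
  assumes "g \<in> FG {x1}"
  shows "(\<lambda>w. nu y1 x1 w g) ` Wmod {y1} {x1} = (\<lambda>c. endo c (exponent g)) ` {c. finite_support c}"
proof -
  have "(\<lambda>w. nu y1 x1 w g) ` Wmod {y1} {x1} = (\<lambda>c. endo c (exponent g)) ` coef ` Wmod {y1} {x1}"
    unfolding image_image using assms by (simp add: nu_eq_endo)
  then show ?thesis by (simp only: coef_image_Wmod)
qed

lemma T_e_eq: "T_e y1 x1 = (\<lambda>c. endo c 0) ` {c. finite_support c}"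
  using image_nu[OF Nil_in_FG] by (simp add: T_e_def Setcompr_eq_image exponent_Nil)

lemma T_x_eq: "T_x y1 x1 = (\<lambda>c. endo c 1) ` {c. finite_support c}"
  using image_nu[of "[(x1, True)]"] gpow_in_FG[of x1 1]
  by (simp add: T_x_def Setcompr_eq_image exponent_letter gpow_1)

lemma T_0_eq: "T_0 y1 x1 = range (endo (\<lambda>n. 0))"
proof -
  have "T_0 y1 x1 = (\<lambda>g. endo (\<lambda>n. 0) (exponent g)) ` FG {x1}"
    unfolding T_0_def Setcompr_eq_image
    by (rule image_cong) (simp_all add: nu_eq_endo coef_zeroW)
  also have "exponent ` FG {x1} = UNIV"
    by (auto intro: rev_image_eqI[OF gpow_in_FG])
  then have "(\<lambda>g. endo (\<lambda>n. 0) (exponent g)) ` FG {x1} = range (endo (\<lambda>n. 0))"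
    by (metis image_image)
  finally show ?thesis .
qed

lemma nu_zeroW_x_eq_nu_0x: "nu y1 x1 zeroW [(x1, True)] = nu_0x"
  using nu_eq_endo[OF zeroW_in_Wmod, of "[(x1, True)]"] gpow_in_FG[of x1 1]
  by (simp add: coef_zeroW exponent_letter gpow_1)

lemma T_e_eq_comp_nu_0x: "T_e y1 x1 = {m \<in> End1. comp m nu_0x = nu_0e}"
  by (auto simp: T_e_eq comp_endo_zero endo_eq_iff endo_in_End1 elim!: End1_cases)

lemma T_x_eq_comp_nu_0x: "T_x y1 x1 = {m \<in> End1. comp m nu_0x = nu_0x}"
  by (auto simp: T_x_eq comp_endo_zero endo_eq_iff endo_in_End1 elim!: End1_cases)

lemma T_0_eq_nu_0x_comp: "T_0 y1 x1 = {m \<in> End1. comp nu_0x m = m}"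
  by (auto simp: T_0_eq comp_endo_zero endo_eq_iff endo_in_End1 elim!: End1_cases)

lemma automorphism_fixes_nu_0e_nu_0x:
  fixes P :: "('y,'x,'r::comm_ring_1) mor \<Rightarrow> ('y,'x,'r) mor"
  assumes "mult_automorphism End1 comp P"
  shows "P nu_0e = nu_0e"
    and "P nu_0x = nu_0x"
proof -
  interpret mult_automorphism End1 comp P by (fact assms)
  have z: "(nu_0e :: ('y,'x,'r) mor) \<in> End1" and e: "(nu_0x :: ('y,'x,'r) mor) \<in> End1"
    by (simp_all add: endo_in_End1)
  show Pz: "P nu_0e = nu_0e"
    using z by (rule fixes_absorbing) (auto elim!: End1_cases simp: comp_endo_zero)
  have central_multiples: "central End1 comp (comp nu_0x n)" if "n \<in> End1" for n
    using that by (auto elim!: End1_cases simp: comp_endo_zero central_endo_zero)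
  show "P nu_0x = nu_0x"
  proof (rule central_idempotent_eq_nu_0x)
    show "P nu_0x \<in> End1" using e by (rule in_carrier)
    show "P nu_0x \<noteq> nu_0e" using eq_iff[OF e z] Pz by (simp add: endo_eq_iff)
    show "comp (P nu_0x) (P nu_0x) = P nu_0x" using hom[OF e e] by (simp add: comp_endo)
    show "central End1 comp (P nu_0x)" using e central_endo_zero by (rule central_image)
    show "\<forall>n\<in>End1. central End1 comp (comp (P nu_0x) n)"
    proof
      fix n :: "('y,'x,'r) mor"
      assume "n \<in> End1"
      then obtain a where a: "a \<in> End1" "n = P a" by (rule preimageE)
      then show "central End1 comp (comp (P nu_0x) n)"
        using central_image[OF closed[OF e a(1)] central_multiples[OF a(1)]]
        by (simp add: hom[OF e a(1)])
    qed
  qed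
qed

end

theorem mainTheorem15:
  fixes Y0 :: "'y set" and X0 :: "'x set" and y1 :: 'y and x1 :: 'x
    and Po :: "'y set \<times> 'x set \<Rightarrow> 'y set \<times> 'x set"
    and Pm :: "'y set \<times> 'x set \<Rightarrow> 'y set \<times> 'x set \<Rightarrow> ('y,'x,'r::comm_ring_1) mor \<Rightarrow> ('y,'x,'r) mor"
  assumes "infinite Y0" and "infinite X0" and "y1 \<in> Y0" and "x1 \<in> X0"
    and "cat_automorphism Y0 X0 Po Pm"
    and "Po ({y1},{x1}) = ({y1},{x1})"
  shows "Pm ({y1},{x1}) ({y1},{x1}) ` T_e y1 x1 = T_e y1 x1 \<and>
         Pm ({y1},{x1}) ({y1},{x1}) ` T_0 y1 x1 = T_0 y1 x1 \<and>
         Pm ({y1},{x1}) ({y1},{x1}) ` T_x y1 x1 = T_x y1 x1 \<and>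
         Pm ({y1},{x1}) ({y1},{x1}) (nu y1 x1 zeroW [(x1,True)]) = nu y1 x1 zeroW [(x1,True)]"
proof -
  interpret single_generator y1 x1 .
  let ?P = "Pm ({y1}, {x1}) ({y1}, {x1})"
  interpret mult_automorphism "End1 :: ('y,'x,'r) mor set" comp ?P
    using mult_automorphism_End[OF assms(5) _ assms(6)] assms(3,4) by (simp add: Obj_def)
  have "?P nu_0e = nu_0e" and "?P nu_0x = nu_0x"
    by (rule automorphism_fixes_nu_0e_nu_0x, unfold_locales)+
  then show ?thesis
    unfolding T_e_eq_comp_nu_0x T_x_eq_comp_nu_0x T_0_eq_nu_0x_comp nu_zeroW_x_eq_nu_0x
    by (simp add: image_solutions_right image_fixed_left endo_in_End1)
qed

end
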